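(* Let $P$ be a program in normal form over a propositional signature $\Sigma$, and $q\in\Sigma$. If $P$ is $q$-forgettable, then $\langle P,\{q\}\rangle$ does not satisfy criterion $\Omega$.
   Context: A program over $\Sigma$ is a finite set of rules $r$ of the form $a_1\vee\dots\vee a_k\leftarrow b_1,\dots,b_l,\ not\,c_1,\dots,not\,c_m,\ not\,not\,d_1,\dots,not\,not\,d_n$ with atoms in $\Sigma$; write $H(r)=\{a_i\}$, $B^+(r)=\{b_i\}$, $B^-(r)=\{c_i\}$, $B^{--}(r)=\{d_i\}$, $B(r)=B^+(r)\cup\{not\,c: c\in B^-(r)\}\cup\{not\,not\,d:d\in B^{--}(r)\}$. $\Sigma(r)$, $\Sigma(P)$ are the atoms occurring in $r$, $P$. Reduct: $P^I=\{H(r)\leftarrow B^+(r): r\in P, B^-(r)\cap I=\emptyset, B^{--}(r)\subseteq I\}$. $I$ classically satisfies $r$ if $B^+(r)\subseteq I$, $B^-(r)\cap I=\emptyset$, $B^{--}(r)\subseteq I$ imply $H(r)\cap I\ne\emptyset$. An HT-interpretation $\langle X,Y\rangle$ ($X\subseteq Y$) is an HT-model of $P$ if $Y$ classically satisfies all rules of $P$ and $X$ all rules of $P^Y$; $\mathcal{HT}(P)$ is the set of HT-models with $X,Y\subseteq\Sigma(P)$. Normal form: $P$ is in normal form if (i) for every atom $a$ and $r\in P$ at most one of $a$, $not\,a$, $not\,not\,a$ is in $B(r)$; (ii) if $a\in H(r)$ then neither $a$ nor $not\,a$ is in $B(r)$; (iii) there are no $r,r'\in P$ with ($H(r')\subseteq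 H(r)$ and $B(r')\subsetneq B(r)$) or ($H(r')\subsetneq H(r)$ and $B(r')\subseteq B(r)$). A self-cycle on $q$ is a rule $r$ with $q\in H(r)$ and $q\in B^{--}(r)$. A program $P$ in normal form is $q$-forgettable if at least one holds: (a) every rule of $P$ in which $q$ occurs is a self-cycle on $q$; (b) $P$ contains the fact $q\leftarrow$ (the rule with head $\{q\}$ and empty body); (c) $P$ contains no self-cycle on $q$. Criterion $\Omega$: for a program $P$, $V\subseteq\Sigma$, $Y\subseteq\Sigma\setminus V$, $A\subseteq V$, let $R^{Y,A}=\{X\setminus V:\langle X,Y\cup A\rangle\in\mathcal{HT}(P)\}$, $Rel^Y=\{A\subseteq V:\langle Y\cup A,Y\cup A\rangle\in\mathcal{HT}(P)$ and no $A'\subsetneq A$ has $\langle Y\cup A',Y\cup A\rangle\in\mathcal{HT}(P)\}$, $\mathcal{R}^Y=\{R^{Y,A}:A\in Rel^Y\}$. $\langle P,V\rangle$ satisfies $\Omega$ if there is $Y\subseteq\Sigma\setminus V$ such that $\mathcal{R}^Y$ is non-empty and has no least element with respect to $\subseteq$. *)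

theory Defs
  imports Main
begin

(* A rule  a1 v ... v ak <- b1,...,bl, not c1,..., not cm, not not d1, ..., not not dn *)
record 'a rule =
  H   :: "'a set"
  Bp  :: "'a set"
  Bn  :: "'a set"
  Bnn :: "'a set"

datatype 'a lit = LPos 'a | LNot 'a | LNotNot 'a

definition body :: "'a rule \<Rightarrow> 'a lit set" where
  "body r = LPos ` Bp r \<union> LNot ` Bn r \<union> LNotNot ` Bnn r"

definition atoms_rule :: "'a rule \<Rightarrow> 'a set" where
  "atoms_rule r = H r \<union> Bp r \<union> Bn r \<union> Bnn r"

definition atoms_prog :: "'a rule set \<Rightarrow> 'a set" where
  "atoms_prog P = (\<Union>r\<in>P. atoms_rule r)"

definition is_program :: "'a set \<Rightarrow> 'a rule set \<Rightarrow> bool" where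
  "is_program Sig P \<longleftrightarrow> finite P \<and>
     (\<forall>r\<in>P. finite (H r) \<and> finite (Bp r) \<and> finite (Bn r) \<and> finite (Bnn r)) \<and>
     atoms_prog P \<subseteq> Sig"

definition reduct :: "'a rule set \<Rightarrow> 'a set \<Rightarrow> ('a set \<times> 'a set) set" where
  "reduct P I = {(H r, Bp r) | r. r \<in> P \<and> Bn r \<inter> I = {} \<and> Bnn r \<subseteq> I}"

definition sat_rule :: "'a set \<Rightarrow> 'a rule \<Rightarrow> bool" where
  "sat_rule I r \<longleftrightarrow>
     (Bp r \<subseteq> I \<and> Bn r \<inter> I = {} \<and> Bnn r \<subseteq> I \<longrightarrow> H r \<inter> I \<noteq> {})"

definition sat_pos :: "'a set \<Rightarrow> ('a set \<times> 'a set) \<Rightarrow> bool" where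
  "sat_pos I hb \<longleftrightarrow> (snd hb \<subseteq> I \<longrightarrow> fst hb \<inter> I \<noteq> {})"

definition HT :: "'a rule set \<Rightarrow> ('a set \<times> 'a set) set" where
  "HT P = {(X, Y). X \<subseteq> Y \<and> Y \<subseteq> atoms_prog P \<and>
                   (\<forall>r\<in>P. sat_rule Y r) \<and> (\<forall>hb\<in>reduct P Y. sat_pos X hb)}"

definition normal_form :: "'a rule set \<Rightarrow> bool" where
  "normal_form P \<longleftrightarrow>
     (\<forall>r\<in>P. \<forall>a. card ({LPos a, LNot a, LNotNot a} \<inter> body r) \<le> 1) \<and>
     (\<forall>r\<in>P. \<forall>a\<in>H r. LPos a \<notin> body r \<and> LNot a \<notin> body r) \<and>
     \<not> (\<exists>r\<in>P. \<exists>r'\<in>P.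
          (H r' \<subseteq> H r \<and> body r' \<subset> body r) \<or> (H r' \<subset> H r \<and> body r' \<subseteq> body r))"

definition self_cycle :: "'a \<Rightarrow> 'a rule \<Rightarrow> bool" where
  "self_cycle q r \<longleftrightarrow> q \<in> H r \<and> q \<in> Bnn r"

definition forgettable :: "'a rule set \<Rightarrow> 'a \<Rightarrow> bool" where
  "forgettable P q \<longleftrightarrow> normal_form P \<and>
     ((\<forall>r\<in>P. q \<in> atoms_rule r \<longrightarrow> self_cycle q r) \<or>
      \<lparr>H = {q}, Bp = {}, Bn = {}, Bnn = {}\<rparr> \<in> P \<or>
      (\<forall>r\<in>P. \<not> self_cycle q r))"

definition RYA :: "'a rule set \<Rightarrow> 'a set \<Rightarrow> 'a set \<Rightarrow> 'a set \<Rightarrow> 'a set set" where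
  "RYA P V Y A = {X - V | X. (X, Y \<union> A) \<in> HT P}"

definition Rel :: "'a rule set \<Rightarrow> 'a set \<Rightarrow> 'a set \<Rightarrow> 'a set set" where
  "Rel P V Y = {A. A \<subseteq> V \<and> (Y \<union> A, Y \<union> A) \<in> HT P \<and>
                   \<not> (\<exists>A'. A' \<subset> A \<and> (Y \<union> A', Y \<union> A) \<in> HT P)}"

definition RY :: "'a rule set \<Rightarrow> 'a set \<Rightarrow> 'a set \<Rightarrow> 'a set set set" where
  "RY P V Y = {RYA P V Y A | A. A \<in> Rel P V Y}"

definition Omega :: "'a set \<Rightarrow> 'a rule set \<Rightarrow> 'a set \<Rightarrow> bool" where
  "Omega Sig P V \<longleftrightarrow> (\<exists>Y. Y \<subseteq> Sig - V \<and> RY P V Y \<noteq> {} \<and>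
       \<not> (\<exists>R\<in>RY P V Y. \<forall>R'\<in>RY P V Y. R \<subseteq> R'))"

end

theory Submission
  imports Defs
begin

text \<open>With \<open>V = {q}\<close> only \<open>{}\<close> and \<open>{q}\<close> can be relevant, so \<open>\<R>\<^sup>Y\<close> can lack a least
  element only if both are relevant and R^{Y,{q}} is not contained in R^{Y,{}}. Each kind of
  forgettability rules this out. If \<open>P\<close> contains the fact \<open>q\<close>, then \<open>Y\<close>, which misses \<open>q\<close>, is
  not a model, so \<open>{}\<close> is not relevant. If \<open>P\<close> has no self-cycle on \<open>q\<close>, the rules of
  \<open>P\<^sup>Y\<^sup>\<union>\<^sup>{\<^sup>q\<^sup>}\<close> outside \<open>P\<^sup>Y\<close> stem from rules with \<open>q\<close> in \<open>B\<^sup>-\<^sup>-\<close> and hence not in the head;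
  as \<open>Y \<union> {q}\<close> satisfies those rules classically, \<open>Y\<close> satisfies their reducts, so
  \<open>\<langle>Y, Y \<union> {q}\<rangle>\<close> is an HT-model and \<open>{q}\<close> is not minimal. If \<open>q\<close> occurs only in self-cycles,
  these are dropped from \<open>P\<^sup>Y\<close> and no other rule mentions \<open>q\<close>, so \<open>\<langle>X - {q}, Y\<rangle>\<close> is an
  HT-model whenever \<open>\<langle>X, Y \<union> {q}\<rangle>\<close> is.\<close>

abbreviation fact :: "'a \<Rightarrow> 'a rule" where
  "fact q \<equiv> \<lparr>H = {q}, Bp = {}, Bn = {}, Bnn = {}\<rparr>"

lemma HT_memI:
  assumes "X \<subseteq> Y" and "Y \<subseteq> atoms_prog P" and "\<And>r. r \<in> P \<Longrightarrow> sat_rule Y r"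
    and "\<And>r. r \<in> P \<Longrightarrow> Bn r \<inter> Y = {} \<Longrightarrow> Bnn r \<subseteq> Y \<Longrightarrow> sat_pos X (H r, Bp r)"
  shows "(X, Y) \<in> HT P"
  using assms unfolding HT_def reduct_def by blast

lemma
  assumes "(X, Y) \<in> HT P"
  shows HT_subset: "X \<subseteq> Y"
    and HT_atoms_prog: "Y \<subseteq> atoms_prog P"
    and HT_sat_rule: "r \<in> P \<Longrightarrow> sat_rule Y r"
    and HT_sat_reduct: "r \<in> P \<Longrightarrow> Bn r \<inter> Y = {} \<Longrightarrow> Bnn r \<subseteq> Y \<Longrightarrow> sat_pos X (H r, Bp r)"
  using assms unfolding HT_def reduct_def by blast+

lemma HT_fact_mem:
  assumes "fact q \<in> P" and "(X, Y) \<in> HT P"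
  shows "q \<in> Y"
  using HT_sat_rule[OF assms(2,1)] by (simp add: sat_rule_def)

lemma HT_no_self_cycle:
  assumes no_cycle: "\<forall>r\<in>P. \<not> self_cycle q r"
    and Y: "(Y, Y) \<in> HT P" and Yq: "(insert q Y, insert q Y) \<in> HT P"
  shows "(Y, insert q Y) \<in> HT P"
proof (rule HT_memI)
  show "Y \<subseteq> insert q Y" by blast
  show "insert q Y \<subseteq> atoms_prog P" using Yq by (rule HT_atoms_prog)
  show "sat_rule (insert q Y) r" if "r \<in> P" for r using Yq that by (rule HT_sat_rule)
  fix r assume r: "r \<in> P" "Bn r \<inter> insert q Y = {}" "Bnn r \<subseteq> insert q Y"
  show "sat_pos Y (H r, Bp r)"
  proof (cases "q \<in> Bnn r")
    case False
    with r have "Bn r \<inter> Y = {}" "Bnn r \<subseteq> Y" by auto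
    with Y r(1) show ?thesis by (rule HT_sat_reduct)
  next
    case True
    with r no_cycle have "q \<notin> H r" by (auto simp: self_cycle_def)
    moreover from Yq r(1) have "sat_rule (insert q Y) r" by (rule HT_sat_rule)
    ultimately show ?thesis
      using r by (auto simp: sat_rule_def sat_pos_def)
  qed
qed

lemma HT_remove_atom_of_self_cycles:
  assumes only_cycles: "\<forall>r\<in>P. q \<in> atoms_rule r \<longrightarrow> self_cycle q r"
    and Y: "(Y, Y) \<in> HT P" and "q \<notin> Y" and X: "(X, insert q Y) \<in> HT P"
  shows "(X - {q}, Y) \<in> HT P"
proof (rule HT_memI)
  show "X - {q} \<subseteq> Y" using HT_subset[OF X] by blast
  show "Y \<subseteq> atoms_prog P" using Y by (rule HT_atoms_prog)
  show "sat_rule Y r" if "r \<in> P" for r using Y that by (rule HT_sat_rule)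
  fix r assume r: "r \<in> P" "Bn r \<inter> Y = {}" "Bnn r \<subseteq> Y"
  with \<open>q \<notin> Y\<close> only_cycles have q_notin: "q \<notin> atoms_rule r"
    by (auto simp: self_cycle_def)
  with r have "Bn r \<inter> insert q Y = {}" "Bnn r \<subseteq> insert q Y"
    by (auto simp: atoms_rule_def)
  with X r(1) have "sat_pos X (H r, Bp r)"
    by (rule HT_sat_reduct)
  with q_notin show "sat_pos (X - {q}) (H r, Bp r)"
    by (auto simp: sat_pos_def atoms_rule_def)
qed

lemma empty_in_Rel_iff: "{} \<in> Rel P V Y \<longleftrightarrow> (Y, Y) \<in> HT P"
  by (simp add: Rel_def)

lemma singleton_in_Rel_iff:
  "{q} \<in> Rel P {q} Y \<longleftrightarrow> (insert q Y, insert q Y) \<in> HT P \<and> (Y, insert q Y) \<notin> HT P"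
  unfolding Rel_def by (auto simp: psubset_eq subset_singleton_iff)

lemma Rel_singleton_cases: "A \<in> Rel P {q} Y \<Longrightarrow> A = {} \<or> A = {q}"
  by (simp add: Rel_def subset_singleton_iff)

lemma RYA_memI: "(X, Y \<union> A) \<in> HT P \<Longrightarrow> X - V \<in> RYA P V Y A"
  unfolding RYA_def by blast

lemma RYA_singleton_subset_empty:
  assumes "\<forall>r\<in>P. q \<in> atoms_rule r \<longrightarrow> self_cycle q r"
    and "(Y, Y) \<in> HT P" and "q \<notin> Y"
  shows "RYA P {q} Y {q} \<subseteq> RYA P {q} Y {}"
proof
  fix Z assume "Z \<in> RYA P {q} Y {q}"
  then obtain X where Z: "Z = X - {q}" and "(X, insert q Y) \<in> HT P"
    unfolding RYA_def by auto
  with assms have "(X - {q}, Y \<union> {}) \<in> HT P"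
    using HT_remove_atom_of_self_cycles by simp
  then have "X - {q} - {q} \<in> RYA P {q} Y {}"
    by (rule RYA_memI)
  then show "Z \<in> RYA P {q} Y {}"
    by (simp add: Z)
qed

lemma not_Omega_singletonI:
  assumes "\<And>Y. q \<notin> Y \<Longrightarrow> {} \<in> Rel P {q} Y \<Longrightarrow> {q} \<in> Rel P {q} Y \<Longrightarrow>
             RYA P {q} Y {q} \<subseteq> RYA P {q} Y {}"
  shows "\<not> Omega Sig P {q}"
proof
  assume "Omega Sig P {q}"
  then obtain Y where "q \<notin> Y" and nonempty: "RY P {q} Y \<noteq> {}"
    and no_least: "\<not> (\<exists>R\<in>RY P {q} Y. \<forall>R'\<in>RY P {q} Y. R \<subseteq> R')"
    unfolding Omega_def by blast
  show False
  proof (cases "{q} \<in> Rel P {q} Y")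
    case True
    have "RYA P {q} Y {q} \<subseteq> R'" if "R' \<in> RY P {q} Y" for R'
    proof -
      from that obtain A where A: "A \<in> Rel P {q} Y" "R' = RYA P {q} Y A"
        unfolding RY_def by blast
      from A(1) have "A = {} \<or> A = {q}"
        by (rule Rel_singleton_cases)
      with A assms[OF \<open>q \<notin> Y\<close> _ True] show ?thesis
        by auto
    qed
    moreover have "RYA P {q} Y {q} \<in> RY P {q} Y"
      using True unfolding RY_def by blast
    ultimately show False
      using no_least by blast
  next
    case False
    then have "Rel P {q} Y \<subseteq> {{}}"
      by (auto dest: Rel_singleton_cases)
    then have "RY P {q} Y \<subseteq> {RYA P {q} Y {}}"
      unfolding RY_def by blast
    with nonempty have "RY P {q} Y = {RYA P {q} Y {}}"
      by blast
    with no_least show False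
      by blast
  qed
qed

theorem theorem4:
  fixes Sig :: "'a set" and P :: "'a rule set" and q :: 'a
  assumes "is_program Sig P"
    and "normal_form P"
    and "q \<in> Sig"
    and "forgettable P q"
  shows "\<not> Omega Sig P {q}"
proof (rule not_Omega_singletonI)
  fix Y assume "q \<notin> Y" and "{} \<in> Rel P {q} Y" and "{q} \<in> Rel P {q} Y"
  then have Y: "(Y, Y) \<in> HT P"
    and Yq: "(insert q Y, insert q Y) \<in> HT P" "(Y, insert q Y) \<notin> HT P"
    by (simp_all add: empty_in_Rel_iff singleton_in_Rel_iff)
  from \<open>forgettable P q\<close> consider
      (only_cycles) "\<forall>r\<in>P. q \<in> atoms_rule r \<longrightarrow> self_cycle q r"
    | (fact) "fact q \<in> P"
    | (no_cycle) "\<forall>r\<in>P. \<not> self_cycle q r"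
    unfolding forgettable_def by blast
  then show "RYA P {q} Y {q} \<subseteq> RYA P {q} Y {}"
  proof cases
    case only_cycles
    from this Y \<open>q \<notin> Y\<close> show ?thesis by (rule RYA_singleton_subset_empty)
  next
    case fact
    from this Y have "q \<in> Y" by (rule HT_fact_mem)
    with \<open>q \<notin> Y\<close> show ?thesis by contradiction
  next
    case no_cycle
    from this Y Yq(1) have "(Y, insert q Y) \<in> HT P" by (rule HT_no_self_cycle)
    with Yq(2) show ?thesis by contradiction
  qed
qed

end
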